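(* Let $q,r$ be coprime integers with $0<q\le r$, and let $K,N$ be integers with $1\le N\le K$ and $N\equiv 1\pmod r$. Call a partition $\lambda=(1^{k_1}2^{k_2}\cdots N^{k_N})\vdash N$ a permissible configuration if (C1) $\ell(\lambda)\le K$; (C2) $\ell(\lambda^* )\le r-q+1$ (no part exceeds $r-q+1$); and (C3) $\sum_{i\ge 2}k_i\le \frac{N-1}{r}\le\frac{K-1}{q}$. Then the number of permissible configurations is \[ \binom{(N-1)/r+r-q}{r-q}. \]
   Context: A partition $\lambda\vdash N$ is a non-increasing sequence of positive integers summing to $N$, written $\lambda=(1^{k_1}2^{k_2}\cdots N^{k_N})$ with $k_i$ the number of parts equal to $i$; $\ell(\lambda)=\sum_i k_i$ is its length, and $\lambda^*$ denotes the conjugate partition (transpose Ferrers diagram), so $\ell(\lambda^* )$ is the largest part of $\lambda$. *)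

theory Defs
  imports Complex_Main "HOL-Number_Theory.Cong"
begin

text \<open>A partition \<lambda> = (1^{k_1} 2^{k_2} ... N^{k_N}) of N is represented by its
multiplicity function k, where k i is the number of parts equal to i.\<close>

definition is_partition_mult :: "nat \<Rightarrow> (nat \<Rightarrow> nat) \<Rightarrow> bool" where
  "is_partition_mult N k \<longleftrightarrow>
     (\<forall>i. k i \<noteq> 0 \<longrightarrow> 1 \<le> i \<and> i \<le> N) \<and> (\<Sum>i=1..N. i * k i) = N"

definition part_length :: "nat \<Rightarrow> (nat \<Rightarrow> nat) \<Rightarrow> nat" where
  "part_length N k = (\<Sum>i=1..N. k i)"

text \<open>\<ell>(\<lambda>*) = largest part of \<lambda>.\<close>
definition largest_part :: "(nat \<Rightarrow> nat) \<Rightarrow> nat" where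
  "largest_part k = Max {i. k i \<noteq> 0}"

definition permissible :: "nat \<Rightarrow> nat \<Rightarrow> nat \<Rightarrow> nat \<Rightarrow> (nat \<Rightarrow> nat) \<Rightarrow> bool" where
  "permissible q r K N k \<longleftrightarrow>
     is_partition_mult N k \<and>
     part_length N k \<le> K \<and>
     largest_part k \<le> r - q + 1 \<and>
     real (\<Sum>i=2..N. k i) \<le> real (N - 1) / real r \<and>
     real (N - 1) / real r \<le> real (K - 1) / real q"

end

(*
  Conditions (C1) and the second half of (C3) are automatic: a partition of N has at most
  N \<le> K parts, and (N - 1)/r \<le> (K - 1)/q because q \<le> r. A partition with parts at most
  n + 1 = r - q + 1 is determined by its multiplicities k_2, ..., k_{n+1}, since
  k_1 = N - \<Sum> i k_i. With m = (N - 1)/r we have (n + 1) m \<le> r m = N - 1, so every choice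
  of k_2, ..., k_{n+1} with \<Sum> k_i \<le> m leaves k_1 \<ge> 0. Hence the permissible configurations
  are counted by the weak compositions of at most m into n parts, of which there are
  C(m + n, n).
*)
theory Submission
  imports Defs
begin

lemma card_lists_sum_le:
  "card {xs :: nat list. length xs = n \<and> sum_list xs \<le> m} = (m + n) choose n"
proof -
  have sum_butlast: "sum_list xs = sum_list (butlast xs) + last xs" if "xs \<noteq> []" for xs :: "nat list"
    by (metis append_butlast_last_id[OF that] sum_list_append sum_list.Cons sum_list.Nil add_0_right)
  have "bij_betw (\<lambda>xs. xs @ [m - sum_list xs])
          {xs. length xs = n \<and> sum_list xs \<le> m} {xs. length xs = Suc n \<and> sum_list xs = m}"
  proof (rule bij_betw_byWitness[where f' = butlast])
    show "\<forall>xs\<in>{xs. length xs = Suc n \<and> sum_list xs = m}. butlast xs @ [m - sum_list (butlast xs)] = xs"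
    proof
      fix xs assume "xs \<in> {xs. length xs = Suc n \<and> sum_list xs = m}"
      then have ne: "xs \<noteq> []" and "m = sum_list xs" by auto
      then have "m - sum_list (butlast xs) = last xs"
        using sum_butlast[OF ne] by linarith
      then show "butlast xs @ [m - sum_list (butlast xs)] = xs" using ne by simp
    qed
    show "butlast ` {xs. length xs = Suc n \<and> sum_list xs = m} \<subseteq> {xs. length xs = n \<and> sum_list xs \<le> m}"
    proof (rule image_subsetI)
      fix xs assume "xs \<in> {xs. length xs = Suc n \<and> sum_list xs = m}"
      then have ne: "xs \<noteq> []" and "length xs = Suc n" "sum_list xs = m" by auto
      then show "butlast xs \<in> {xs. length xs = n \<and> sum_list xs \<le> m}"
        using sum_butlast[OF ne] by simp
    qed
  qed auto
  then have "card {xs :: nat list. length xs = n \<and> sum_list xs \<le> m} = (m + n) choose m"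
    using bij_betw_same_card card_length_sum_list by fastforce
  then show ?thesis
    using binomial_symmetric[of m "m + n"] by simp
qed

lemma part_length_le:
  assumes "is_partition_mult N k"
  shows "part_length N k \<le> N"
proof -
  have "part_length N k \<le> (\<Sum>i=1..N. i * k i)"
    unfolding part_length_def by (intro sum_mono) simp
  with assms show ?thesis
    by (simp add: is_partition_mult_def)
qed

lemma largest_part_le_iff:
  assumes "is_partition_mult N k" and "1 \<le> N"
  shows "largest_part k \<le> d \<longleftrightarrow> (\<forall>i. k i \<noteq> 0 \<longrightarrow> i \<le> d)"
proof -
  have "{i. k i \<noteq> 0} \<subseteq> {1..N}"
    using assms(1) by (auto simp: is_partition_mult_def)
  then have "finite {i. k i \<noteq> 0}"
    by (rule finite_subset) simp
  moreover have "{i. k i \<noteq> 0} \<noteq> {}"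
  proof
    assume "{i. k i \<noteq> 0} = {}"
    then have "\<forall>i. k i = 0" by blast
    with assms show False by (simp add: is_partition_mult_def)
  qed
  ultimately show ?thesis
    by (simp add: largest_part_def Max_le_iff)
qed

lemma permissible_iff:
  assumes "0 < q" and "q \<le> r" and "1 \<le> N" and "N \<le> K" and "[N = 1] (mod r)"
  shows "permissible q r K N k \<longleftrightarrow>
    is_partition_mult N k \<and> (\<forall>i. k i \<noteq> 0 \<longrightarrow> i \<le> Suc (r - q)) \<and> (\<Sum>i=2..N. k i) \<le> (N - 1) div r"
proof -
  define m where "m = (N - 1) div r"
  have "r dvd N - 1"
    using assms(3,5) by (simp add: cong_altdef_nat)
  then have Nm: "N - 1 = m * r"
    by (simp add: m_def)
  then have "real (N - 1) / real r = real m"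
    using assms(1,2) by simp
  moreover have "real m \<le> real (K - 1) / real q"
  proof -
    have "m * q \<le> K - 1"
      using Nm assms(2,4) by (metis diff_le_mono le_trans mult_le_mono2)
    then show ?thesis
      using assms(1) by (simp add: pos_le_divide_eq flip: of_nat_mult)
  qed
  ultimately show ?thesis
    using part_length_le[of N k] largest_part_le_iff[OF _ assms(3)] assms(4)
    by (auto simp: permissible_def m_def simp del: of_nat_diff of_nat_sum)
qed

lemma sum_nonunit_parts:
  fixes k g :: "nat \<Rightarrow> nat"
  assumes "\<forall>i. k i \<noteq> 0 \<longrightarrow> i \<le> N \<and> i \<le> Suc n"
  shows "(\<Sum>i=2..N. g i * k i) = (\<Sum>j<n. g (j + 2) * k (j + 2))"
proof -
  have "(\<Sum>i=2..N. g i * k i) = (\<Sum>i\<in>{2..N} \<inter> {2..<n + 2}. g i * k i)"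
    by (rule sum.mono_neutral_right) (use assms in fastforce)+
  also have "\<dots> = (\<Sum>i=2..<n + 2. g i * k i)"
    by (rule sum.mono_neutral_left) (use assms in auto)
  also have "\<dots> = (\<Sum>j<n. g (j + 2) * k (j + 2))"
    using sum.shift_bounds_nat_ivl[of "\<lambda>i. g i * k i" 0 2 n] unfolding add_0 atLeast0LessThan .
  finally show ?thesis .
qed

definition nonunit_mults :: "nat \<Rightarrow> (nat \<Rightarrow> nat) \<Rightarrow> nat list" where
  "nonunit_mults n k = map (\<lambda>j. k (j + 2)) [0..<n]"

definition partition_of_nonunit_mults :: "nat \<Rightarrow> nat list \<Rightarrow> nat \<Rightarrow> nat" where
  "partition_of_nonunit_mults N xs i =
     (if i = 1 then N - (\<Sum>j<length xs. (j + 2) * xs ! j)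
      else if 2 \<le> i \<and> i < length xs + 2 then xs ! (i - 2) else 0)"

lemma sum_list_nonunit_mults: "sum_list (nonunit_mults n k) = (\<Sum>j<n. k (j + 2))"
  by (simp add: nonunit_mults_def interv_sum_list_conv_sum_set_nat atLeast0LessThan)

lemma partition_of_nonunit_mults_inverse:
  assumes "is_partition_mult N k" and "1 \<le> N" and "\<forall>i. k i \<noteq> 0 \<longrightarrow> i \<le> Suc n"
  shows "partition_of_nonunit_mults N (nonunit_mults n k) = k"
proof
  fix i
  have supp: "\<forall>i. k i \<noteq> 0 \<longrightarrow> i \<le> N \<and> i \<le> Suc n" and supp1: "k 0 = 0"
    using assms by (auto simp: is_partition_mult_def)
  have "N = (\<Sum>i=1..N. i * k i)"
    using assms(1) by (simp add: is_partition_mult_def)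
  also have "\<dots> = k 1 + (\<Sum>i=2..N. i * k i)"
    using \<open>1 \<le> N\<close> by (simp add: sum.atLeast_Suc_atMost numeral_2_eq_2)
  finally have weight: "N = k 1 + (\<Sum>j<n. (j + 2) * k (j + 2))"
    using sum_nonunit_parts[OF supp, of "\<lambda>i. i"] by simp
  show "partition_of_nonunit_mults N (nonunit_mults n k) i = k i"
  proof (cases "2 \<le> i \<and> i < n + 2")
    case True
    then have "i - 2 + 2 = i" by linarith
    then show ?thesis
      using True by (simp add: partition_of_nonunit_mults_def nonunit_mults_def)
  next
    case False
    then have "i = 0 \<or> i = 1 \<or> n + 2 \<le> i" by linarith
    then have "i = 1 \<or> k i = 0"
      using supp supp1 by fastforce
    then show ?thesis
      using False weight by (auto simp: partition_of_nonunit_mults_def nonunit_mults_def)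
  qed
qed

lemma nonunit_mults_partition_of_nonunit_mults:
  "nonunit_mults (length xs) (partition_of_nonunit_mults N xs) = xs"
  by (rule nth_equalityI) (simp_all add: nonunit_mults_def partition_of_nonunit_mults_def)

lemma partition_of_nonunit_mults:
  assumes "Suc (length xs) * sum_list xs \<le> N" and "1 \<le> N"
  defines "k \<equiv> partition_of_nonunit_mults N xs"
  shows "is_partition_mult N k" and "\<forall>i. k i \<noteq> 0 \<longrightarrow> i \<le> Suc (length xs)"
    and "(\<Sum>i=2..N. k i) = sum_list xs"
proof -
  let ?n = "length xs"
  define S where "S = (\<Sum>j<?n. (j + 2) * xs ! j)"
  have "S \<le> (\<Sum>j<?n. Suc ?n * xs ! j)"
    unfolding S_def by (intro sum_mono mult_right_mono) simp_all
  also have "\<dots> = Suc ?n * sum_list xs"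
    by (simp add: sum_list_sum_nth atLeast0LessThan sum_distrib_left)
  finally have "S \<le> N" using assms(1) by linarith
  have supp: "1 \<le> i \<and> i \<le> N \<and> i \<le> Suc ?n" if "k i \<noteq> 0" for i
  proof (cases "i = 1")
    case False
    with that have i: "2 \<le> i" "i - 2 < ?n" and "xs ! (i - 2) \<noteq> 0"
      by (auto simp: k_def partition_of_nonunit_mults_def split: if_splits)
    have "i = (i - 2 + 2) * 1" using i(1) by (simp only: mult_1_right le_add_diff_inverse2)
    also have "\<dots> \<le> (i - 2 + 2) * xs ! (i - 2)"
      using \<open>xs ! (i - 2) \<noteq> 0\<close> by (intro mult_le_mono2) simp
    also have "\<dots> \<le> S"
      unfolding S_def using i by (intro member_le_sum) auto
    finally show ?thesis using i \<open>S \<le> N\<close> by linarith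
  qed (use assms(2) in simp)
  have nonunit: "(\<Sum>i=2..N. g i * k i) = (\<Sum>j<?n. g (j + 2) * xs ! j)" for g
    using sum_nonunit_parts[of k N ?n g] supp by (simp add: k_def partition_of_nonunit_mults_def)
  have "(\<Sum>i=1..N. i * k i) = k 1 + (\<Sum>i=2..N. i * k i)"
    using assms(2) by (simp add: sum.atLeast_Suc_atMost numeral_2_eq_2)
  also have "\<dots> = (N - S) + S"
    using nonunit[of "\<lambda>i. i"] by (simp add: k_def partition_of_nonunit_mults_def S_def)
  finally show "is_partition_mult N k"
    using \<open>S \<le> N\<close> supp by (auto simp: is_partition_mult_def)
  show "\<forall>i. k i \<noteq> 0 \<longrightarrow> i \<le> Suc ?n"
    using supp by blast
  show "(\<Sum>i=2..N. k i) = sum_list xs"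
    using nonunit[of "\<lambda>_. 1"] by (simp add: sum_list_sum_nth atLeast0LessThan)
qed

lemma bij_betw_nonunit_mults:
  assumes "1 \<le> N" and "Suc n * m \<le> N"
  shows "bij_betw (nonunit_mults n)
           {k. is_partition_mult N k \<and> (\<forall>i. k i \<noteq> 0 \<longrightarrow> i \<le> Suc n) \<and> (\<Sum>i=2..N. k i) \<le> m}
           {xs. length xs = n \<and> sum_list xs \<le> m}"
    (is "bij_betw _ ?P ?L")
proof (rule bij_betw_byWitness[where f' = "partition_of_nonunit_mults N"])
  show "nonunit_mults n ` ?P \<subseteq> ?L"
  proof (rule image_subsetI)
    fix k assume k: "k \<in> ?P"
    then have "\<forall>i. k i \<noteq> 0 \<longrightarrow> i \<le> N \<and> i \<le> Suc n"
      by (auto simp: is_partition_mult_def)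
    then have "sum_list (nonunit_mults n k) = (\<Sum>i=2..N. k i)"
      using sum_nonunit_parts[of k N n "\<lambda>_. 1"] by (simp add: sum_list_nonunit_mults)
    with k show "nonunit_mults n k \<in> ?L"
      by (simp add: nonunit_mults_def)
  qed
  show "partition_of_nonunit_mults N ` ?L \<subseteq> ?P"
  proof (rule image_subsetI)
    fix xs assume xs: "xs \<in> ?L"
    then have "Suc (length xs) * sum_list xs \<le> N"
      using assms(2) by (metis (mono_tags) mem_Collect_eq mult_le_mono2 order_trans)
    with xs show "partition_of_nonunit_mults N xs \<in> ?P"
      using partition_of_nonunit_mults[OF _ assms(1)] by auto
  qed
qed (use partition_of_nonunit_mults_inverse[OF _ assms(1)] nonunit_mults_partition_of_nonunit_mults in auto)

theorem proposition3:
  fixes q r K N :: nat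
  assumes "coprime q r" and "0 < q" and "q \<le> r"
    and "1 \<le> N" and "N \<le> K" and "[N = 1] (mod r)"
  shows "card {k. permissible q r K N k} = ((N - 1) div r + (r - q)) choose (r - q)"
proof -
  define n where "n = r - q"
  define m where "m = (N - 1) div r"
  have "r dvd N - 1"
    using assms(4,6) by (simp add: cong_altdef_nat)
  have "Suc n \<le> r"
    using assms(2,3) by (simp add: n_def)
  then have "Suc n * m \<le> r * m"
    by (rule mult_right_mono) simp
  also have "r * m \<le> N"
    using \<open>r dvd N - 1\<close> by (simp add: m_def)
  finally have "Suc n * m \<le> N" .
  have "{k. permissible q r K N k}
      = {k. is_partition_mult N k \<and> (\<forall>i. k i \<noteq> 0 \<longrightarrow> i \<le> Suc n) \<and> (\<Sum>i=2..N. k i) \<le> m}"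
    using permissible_iff[OF assms(2-6)] by (simp add: n_def m_def)
  then have "card {k. permissible q r K N k} = card {xs. length xs = n \<and> sum_list xs \<le> m}"
    using bij_betw_same_card[OF bij_betw_nonunit_mults[OF assms(4) \<open>Suc n * m \<le> N\<close>]] by simp
  then show ?thesis
    by (simp add: card_lists_sum_le n_def m_def)
qed

end
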